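(* Let $v\in T$ be a point with at least one irrational coordinate, with itinerary $\mathbb{X}_{a_1},\mathbb{X}_{a_2},\dots$. For $n\ge1$ let $\mathbf{I}_{v,n} = \mathbf{X}_{a_1}^{-1}\mathbf{X}_{a_2}^{-1}\cdots\mathbf{X}_{a_n}^{-1}$ and let $\mathbf{I}_{v,n}V$ be the $3\times 3$ integer matrix with $V = \begin{pmatrix}0&1&1\\0&0&1\\1&1&1\end{pmatrix}$. Then the closed tetrahedron in $\mathbb{R}^3$ whose vertices are the origin and the three columns of $\mathbf{I}_{v,n}V$ contains no point of $\mathbb{Z}^3$ other than its four vertices.
   Context: Let $T = \{(x,y)\in\mathbb{R}^2 : 0 \le y \le x \le 1\}$. For integers $n\ge1$ define $\mathbb{A}_n = \{(x,y) : \frac{1}{n+1} < x \le \frac1n,\ 0 \le y \le 1-nx\}$ and $\mathbb{B}_n = \{(x,y) : 1-nx < y \le x \le \frac1n\}$, and the matrices $\mathbf{A}_n = \begin{pmatrix}-n&0&1\\0&1&0\\1&0&0\end{pmatrix}$, $\mathbf{B}_n=\begin{pmatrix}1-n&-1&1\\1&-1&0\\1&0&0\end{pmatrix}$ (both in $SL(3,\mathbb{Z})$). The 2-dimensional Gauss map $G:T\to T$ is $G(0,0)=(0,0)$ and, writing points as homogeneous vectors $(x,y,1)^T$, $G(v)=\mathbf{A}_n v$ on $\mathbb{A}_n$ and $G(v)=\mathbf{B}_n v$ on $\mathbb{B}_n$ (up to scaling); in affine coordinates $G(x,y)=\left(\frac1x-n,\frac yx\right)$ on $\mathbb{A}_n$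 and $G(x,y)=\left(\frac{1-y}{x}-n+1,\frac{x-y}{x}\right)$ on $\mathbb{B}_n$. For a point $v$ whose forward orbit never hits $(0,0)$, its itinerary is the sequence $\mathbb{X}_{a_1},\mathbb{X}_{a_2},\dots$ ($\mathbb{X}\in\{\mathbb{A},\mathbb{B}\}$) with $G^{k-1}(v)\in\mathbb{X}_{a_k}$, and $\mathbf{X}_{a_k}$ denotes the corresponding matrix $\mathbf{A}_{a_k}$ or $\mathbf{B}_{a_k}$. *)

theory Defs
  imports "HOL-Analysis.Analysis"
begin

definition triT :: "(real \<times> real) set" where
  "triT = {(x, y). 0 \<le> y \<and> y \<le> x \<and> x \<le> 1}"

definition regA :: "nat \<Rightarrow> (real \<times> real) set" where
  "regA n = {(x, y). 1 / (real n + 1) < x \<and> x \<le> 1 / real n \<and> 0 \<le> y \<and> y \<le> 1 - real n * x}"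

definition regB :: "nat \<Rightarrow> (real \<times> real) set" where
  "regB n = {(x, y). 1 - real n * x < y \<and> y \<le> x \<and> x \<le> 1 / real n}"

definition region :: "bool \<Rightarrow> nat \<Rightarrow> (real \<times> real) set" where
  "region b n = (if b then regA n else regB n)"

definition gaussG :: "real \<times> real \<Rightarrow> real \<times> real" where
  "gaussG p = (let (x, y) = p in
     if p = (0, 0) then (0, 0)
     else if (\<exists>n\<ge>1. p \<in> regA n) then
       (let n = (THE n. n \<ge> 1 \<and> p \<in> regA n) in (1 / x - real n, y / x))
     else
       (let n = (THE n. n \<ge> 1 \<and> p \<in> regB n) in ((1 - y) / x - real n + 1, (x - y) / x)))"

text \<open>Itinerary: the k-th letter (k = 0, 1, ...) is the region containing G^k v;
  in the paper's indexing this is X_{a_{k+1}}.\<close>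
definition itin :: "real \<times> real \<Rightarrow> nat \<Rightarrow> bool \<times> nat" where
  "itin v k = (THE bn. snd bn \<ge> 1 \<and> (gaussG ^^ k) v \<in> region (fst bn) (snd bn))"

definition matA :: "nat \<Rightarrow> real^3^3" where
  "matA n = vector [vector [- real n, 0, 1], vector [0, 1, 0], vector [1, 0, 0]]"

definition matB :: "nat \<Rightarrow> real^3^3" where
  "matB n = vector [vector [1 - real n, -1, 1], vector [1, -1, 0], vector [1, 0, 0]]"

definition letterMat :: "bool \<times> nat \<Rightarrow> real^3^3" where
  "letterMat bn = (if fst bn then matA (snd bn) else matB (snd bn))"

fun Imat :: "real \<times> real \<Rightarrow> nat \<Rightarrow> real^3^3" where
  "Imat v 0 = mat 1"
| "Imat v (Suc n) = Imat v n ** matrix_inv (letterMat (itin v n))"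

definition matV :: "real^3^3" where
  "matV = vector [vector [0, 1, 1], vector [0, 0, 1], vector [1, 1, 1]]"

definition integral_point :: "real^3 \<Rightarrow> bool" where
  "integral_point p \<longleftrightarrow> (\<forall>i. p $ i \<in> \<int>)"

end

theory Submission
  imports Defs
begin

text \<open>Every letter matrix, and \<open>V\<close>, has an inverse with integer entries, so \<open>M = I\<^sub>v\<^sub>,\<^sub>n V\<close>
  is unimodular. The linear map \<open>M\<close> sends the standard simplex with vertices \<open>0, e\<^sub>1, e\<^sub>2, e\<^sub>3\<close>
  onto the tetrahedron and \<open>\<int>\<^sup>3\<close> onto itself, so the lattice points of the tetrahedron are
  the images of those of the standard simplex, which are just its vertices.\<close>

definition integral_matrix :: "real^'n^'m \<Rightarrow> bool" where
  "integral_matrix M \<longleftrightarrow> (\<forall>i j. M $ i $ j \<in> \<int>)"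

text \<open>A left inverse of a square matrix is two-sided (\<open>matrix_left_right_inverse\<close>).\<close>
definition unimodular :: "real^'n^'n \<Rightarrow> bool" where
  "unimodular M \<longleftrightarrow> integral_matrix M \<and> (\<exists>N. integral_matrix N \<and> N ** M = mat 1)"

lemma integral_matrix_mult:
  "integral_matrix A \<Longrightarrow> integral_matrix B \<Longrightarrow> integral_matrix (A ** B)"
  unfolding integral_matrix_def matrix_matrix_mult_def by (auto intro!: Ints_sum Ints_mult)

lemma integral_matrix_mat_1: "integral_matrix (mat 1)"
  unfolding integral_matrix_def mat_def by simp

lemma integral_matrix_3x3_iff:
  "integral_matrix (vector [vector [a, b, c], vector [d, e, f], vector [g, h, k]] :: real^3^3) \<longleftrightarrow>
     a \<in> \<int> \<and> b \<in> \<int> \<and> c \<in> \<int> \<and> d \<in> \<int> \<and> e \<in> \<int> \<and> f \<in> \<int> \<and> g \<in> \<int> \<and> h \<in> \<int> \<and> k \<in> \<int>"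
  unfolding integral_matrix_def forall_3 by simp

lemma integral_point_matrix_vector_mult:
  "integral_matrix A \<Longrightarrow> integral_point p \<Longrightarrow> integral_point (A *v p)"
  unfolding integral_matrix_def integral_point_def matrix_vector_mult_def
  by (auto intro!: Ints_sum Ints_mult)

lemma matrix_inv_eq_left_inverse:
  fixes A N :: "'a::field^'n^'n"
  assumes "N ** A = mat 1"
  shows "matrix_inv A = N"
proof -
  have "A ** N = mat 1" using assms matrix_left_right_inverse by blast
  then have inv: "A ** matrix_inv A = mat 1 \<and> matrix_inv A ** A = mat 1"
    using assms unfolding matrix_inv_def by (rule someI[where x = N, OF conjI])
  have "matrix_inv A = (N ** A) ** matrix_inv A" using assms by simp
  also have "\<dots> = N ** (A ** matrix_inv A)" by (simp add: matrix_mul_assoc)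
  finally show ?thesis using inv by simp
qed

lemma unimodular_mat_1: "unimodular (mat 1)"
  unfolding unimodular_def using integral_matrix_mat_1 by auto

lemma unimodular_mult:
  assumes "unimodular A" "unimodular B"
  shows "unimodular (A ** B)"
proof -
  obtain M N where "integral_matrix M" "M ** A = mat 1" "integral_matrix N" "N ** B = mat 1"
    using assms unfolding unimodular_def by blast
  moreover have "(N ** M) ** (A ** B) = N ** (M ** A) ** B" by (simp add: matrix_mul_assoc)
  ultimately have "integral_matrix (N ** M) \<and> (N ** M) ** (A ** B) = mat 1"
    by (simp add: integral_matrix_mult)
  then show ?thesis
    using assms unfolding unimodular_def by (blast intro: integral_matrix_mult)
qed

lemma unimodular_matrix_inv:
  assumes "unimodular A"
  shows "unimodular (matrix_inv A)"
proof -
  obtain N where N: "integral_matrix N" "N ** A = mat 1"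
    using assms unfolding unimodular_def by blast
  then have "matrix_inv A = N" "A ** N = mat 1"
    using matrix_inv_eq_left_inverse matrix_left_right_inverse by blast+
  then show ?thesis
    using assms N(1) unfolding unimodular_def by blast
qed

lemmas matrix_3x3_simps = matrix_matrix_mult_def mat_def vec_eq_iff forall_3 sum_3

lemma unimodular_matA: "unimodular (matA n)"
  unfolding unimodular_def
proof (intro conjI exI)
  let ?N = "vector [vector [0, 0, 1], vector [0, 1, 0], vector [1, 0, real n]] :: real^3^3"
  show "integral_matrix (matA n)" "integral_matrix ?N"
    by (simp_all add: matA_def integral_matrix_3x3_iff)
  show "?N ** matA n = mat 1"
    unfolding matA_def matrix_3x3_simps by simp
qed

lemma unimodular_matB: "unimodular (matB n)"
  unfolding unimodular_def
proof (intro conjI exI)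
  let ?N = "vector [vector [0, 0, 1], vector [0, -1, 1], vector [1, -1, real n]] :: real^3^3"
  show "integral_matrix (matB n)" "integral_matrix ?N"
    by (simp_all add: matB_def integral_matrix_3x3_iff)
  show "?N ** matB n = mat 1"
    unfolding matB_def matrix_3x3_simps by (simp add: algebra_simps)
qed

lemma unimodular_matV: "unimodular matV"
  unfolding unimodular_def
proof (intro conjI exI)
  let ?N = "vector [vector [-1, 0, 1], vector [1, -1, 0], vector [0, 1, 0]] :: real^3^3"
  show "integral_matrix matV" "integral_matrix ?N"
    by (simp_all add: matV_def integral_matrix_3x3_iff)
  show "?N ** matV = mat 1"
    unfolding matV_def matrix_3x3_simps by simp
qed

lemma unimodular_letterMat: "unimodular (letterMat bn)"
  unfolding letterMat_def using unimodular_matA unimodular_matB by simp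

lemma unimodular_Imat: "unimodular (Imat v n)"
  by (induction n) (simp_all add: unimodular_mat_1 unimodular_mult unimodular_matrix_inv unimodular_letterMat)

lemma convex_hull_unit_simplex_subset:
  "convex hull {0, axis 1 1, axis 2 1, axis 3 1} \<subseteq>
     {l :: real^3. (\<forall>i. 0 \<le> l $ i) \<and> l $ 1 + l $ 2 + l $ 3 \<le> 1}"
proof (rule hull_minimal)
  show "convex {l :: real^3. (\<forall>i. 0 \<le> l $ i) \<and> l $ 1 + l $ 2 + l $ 3 \<le> 1}"
  proof (rule convexI, safe)
    fix x y :: "real^3" and u v :: real
    assume "\<forall>i. 0 \<le> x $ i" "x $ 1 + x $ 2 + x $ 3 \<le> 1" "\<forall>i. 0 \<le> y $ i" "y $ 1 + y $ 2 + y $ 3 \<le> 1"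
      and uv: "0 \<le> u" "0 \<le> v" "u + v = 1"
    then show "0 \<le> (u *\<^sub>R x + v *\<^sub>R y) $ i" for i by simp
    have "(u *\<^sub>R x + v *\<^sub>R y) $ 1 + (u *\<^sub>R x + v *\<^sub>R y) $ 2 + (u *\<^sub>R x + v *\<^sub>R y) $ 3
        = u * (x $ 1 + x $ 2 + x $ 3) + v * (y $ 1 + y $ 2 + y $ 3)"
      by (simp add: algebra_simps)
    also have "\<dots> \<le> u * 1 + v * 1"
      using uv \<open>x $ 1 + x $ 2 + x $ 3 \<le> 1\<close> \<open>y $ 1 + y $ 2 + y $ 3 \<le> 1\<close>
      by (intro add_mono mult_left_mono) auto
    finally show "(u *\<^sub>R x + v *\<^sub>R y) $ 1 + (u *\<^sub>R x + v *\<^sub>R y) $ 2 + (u *\<^sub>R x + v *\<^sub>R y) $ 3 \<le> 1"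
      using uv by simp
  qed
qed (auto simp: axis_def forall_3)

lemma integral_point_unit_simplex:
  assumes "l \<in> convex hull {0, axis 1 1, axis 2 1, axis 3 1}" "integral_point l"
  shows "l \<in> {0, axis 1 1, axis 2 1, axis 3 1}"
proof -
  have nonneg: "\<forall>i. 0 \<le> l $ i" and sum_le: "l $ 1 + l $ 2 + l $ 3 \<le> 1"
    using assms(1) convex_hull_unit_simplex_subset by blast+
  have "l $ i = 0 \<or> 1 \<le> l $ i" for i
    using Ints_nonzero_abs_ge1[of "l $ i"] assms(2) nonneg unfolding integral_point_def by auto
  then have "l $ 1 = 0 \<or> 1 \<le> l $ 1" "l $ 2 = 0 \<or> 1 \<le> l $ 2" "l $ 3 = 0 \<or> 1 \<le> l $ 3"
    by blast+
  then have "(l $ 1, l $ 2, l $ 3) \<in> {(0, 0, 0), (1, 0, 0), (0, 1, 0), (0, 0, 1)}"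
    using nonneg sum_le by auto
  then have "l = 0 \<or> l = axis 1 1 \<or> l = axis 2 1 \<or> l = axis 3 1"
    unfolding vec_eq_iff forall_3 axis_def by auto
  then show ?thesis by blast
qed

lemma integral_point_unimodular_tetrahedron:
  fixes M :: "real^3^3"
  assumes "unimodular M"
    and "p \<in> convex hull {0, column 1 M, column 2 M, column 3 M}" "integral_point p"
  shows "p \<in> {0, column 1 M, column 2 M, column 3 M}"
proof -
  obtain N where N: "integral_matrix N" "N ** M = mat 1"
    using assms(1) unfolding unimodular_def by blast
  have vertices: "{0, column 1 M, column 2 M, column 3 M} = (*v) M ` {0, axis 1 1, axis 2 1, axis 3 1}"
    by (simp add: matrix_vector_mult_basis)
  have "p \<in> (*v) M ` (convex hull {0, axis 1 1, axis 2 1, axis 3 1})"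
    using assms(2) unfolding vertices convex_hull_linear_image[OF matrix_vector_mul_linear] .
  then obtain l where l: "l \<in> convex hull {0, axis 1 1, axis 2 1, axis 3 1}" "p = M *v l"
    by blast
  have "l = N *v p"
    using N(2) l(2) by (simp add: matrix_vector_mul_assoc)
  then have "integral_point l"
    using N(1) assms(3) integral_point_matrix_vector_mult by simp
  then have "l \<in> {0, axis 1 1, axis 2 1, axis 3 1}"
    using integral_point_unit_simplex[OF l(1)] by blast
  then show ?thesis
    unfolding vertices l(2) by (rule imageI)
qed

theorem mainTheorem12:
  fixes x y :: real and n :: nat
  assumes "(x, y) \<in> triT"
    and "x \<notin> \<rat> \<or> y \<notin> \<rat>"
    and "n \<ge> 1"
  shows "\<forall>p \<in> convex hull {0, column 1 (Imat (x, y) n ** matV),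
                               column 2 (Imat (x, y) n ** matV),
                               column 3 (Imat (x, y) n ** matV)}.
           integral_point p \<longrightarrow>
           p \<in> {0, column 1 (Imat (x, y) n ** matV),
                   column 2 (Imat (x, y) n ** matV),
                   column 3 (Imat (x, y) n ** matV)}"
  using integral_point_unimodular_tetrahedron[OF unimodular_mult[OF unimodular_Imat unimodular_matV]]
  by blast

end
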